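(* Let $d\in\mathbb{N}$. For every $y\in\mathbb{R}^d$, the set $\Pi^{y}\cap[0,1]^d$ has Lebesgue measure $0$ or $1$.
   Context: For $z\in\mathbb{R}^d$, $\|z\|$ denotes the sup-norm distance from $z$ to $\mathbb{Z}^d$. Write $\mathbb{N}=\{1,2,\dots\}$. For $\psi:\mathbb{N}\to\mathbb{R}_{\ge 0}$, let $W(\psi)$ be the set of pairs $(x,y)\in\mathbb{R}^d\times\mathbb{R}^d$ for which $\|nx+y\|<\psi(n)$ holds for infinitely many $n\in\mathbb{N}$. $\mathcal{D}$ is the set of all non-increasing $\psi:\mathbb{N}\to\mathbb{R}_{\ge0}$ with $\sum_n\psi(n)^d=\infty$, and $\Pi=\bigcap_{\psi\in\mathcal{D}}W(\psi)$. $\Pi^{y}=\{x\in\mathbb{R}^d:(x,y)\in\Pi\}$. Equivalently, $\Pi^y$ is the set of $x$ such that for every $\psi\in\mathcal{D}$ there are infinitely many $n\in\mathbb{N}$ with $\|nx+y\|<\psi(n)$. *)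

theory Defs
  imports "HOL-Analysis.Analysis"
begin

definition dZ :: "real ^ 'n::finite \<Rightarrow> real" where
  "dZ z = (MAX i\<in>UNIV. \<bar>z $ i - of_int (round (z $ i))\<bar>)"

text \<open>The class D: non-increasing psi : N -> [0,inf) with sum psi(n)^d divergent
  (d = CARD('n)). Only values at n >= 1 matter.\<close>
definition Dclass :: "'n::finite itself \<Rightarrow> (nat \<Rightarrow> real) set" where
  "Dclass _ = {\<psi>. (\<forall>n\<ge>1. \<psi> n \<ge> 0) \<and> (\<forall>m n. 1 \<le> m \<longrightarrow> m \<le> n \<longrightarrow> \<psi> n \<le> \<psi> m)
              \<and> \<not> summable (\<lambda>n. \<psi> (Suc n) ^ CARD('n))}"

definition W :: "(nat \<Rightarrow> real) \<Rightarrow> ((real ^ 'n::finite) \<times> (real ^ 'n)) set" where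
  "W \<psi> = {(x, y). infinite {n::nat. n \<ge> 1 \<and> dZ (of_nat n *\<^sub>R x + y) < \<psi> n}}"

definition Pi_set :: "((real ^ 'n::finite) \<times> (real ^ 'n)) set" where
  "Pi_set = (\<Inter>\<psi>\<in>Dclass TYPE('n). W \<psi>)"

definition Pi_fiber :: "real ^ 'n::finite \<Rightarrow> (real ^ 'n) set" where
  "Pi_fiber y = {x. (x, y) \<in> Pi_set}"

end

theory Submission
  imports Defs
begin

text \<open>
  If \<open>x \<in> \<Pi>\<^sup>y\<close> then, for every \<open>\<epsilon> > 0\<close> and all large \<open>k\<close>, some \<open>m \<le> 2\<^sup>k\<close> satisfies
  \<open>\<parallel>mx + y\<parallel> < (\<epsilon>/2\<^sup>k)\<^sup>1\<^sup>/\<^sup>d\<close>: otherwise the scales \<open>k\<close> where this fails are infinitely many,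
  and the step function \<open>\<psi>(n) = (\<epsilon>/2\<^sup>k)\<^sup>1\<^sup>/\<^sup>d\<close>, with \<open>k\<close> the first such scale with \<open>n \<le> 2\<^sup>k\<close>,
  lies in \<open>\<D>\<close> (each failing scale contributes at least \<open>\<epsilon>/2\<close> to \<open>\<Sum> \<psi>(n)\<^sup>d\<close>) while
  \<open>\<parallel>nx + y\<parallel> \<ge> \<psi>(n)\<close> for all \<open>n\<close>. For fixed \<open>m\<close>, the points of \<open>[0,1]\<^sup>d\<close> with
  \<open>\<parallel>mx + y\<parallel> < r\<close> lie in \<open>(m+2)\<^sup>d\<close> boxes of side \<open>2r/m\<close>, of total volume at most \<open>(6r)\<^sup>d\<close>;
  summing over \<open>m \<le> 2\<^sup>k\<close> covers \<open>\<Pi>\<^sup>y \<inter> [0,1]\<^sup>d\<close> by sets of measure \<open>6\<^sup>d\<epsilon>\<close>. So the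
  measure is always \<open>0\<close>.
\<close>

lemma dZ_coord_le: "\<bar>z $ i - of_int (round (z $ i))\<bar> \<le> dZ (z :: real ^ 'n::finite)"
  unfolding dZ_def by (rule Max_ge) auto

lemma round_between_floor: "\<lfloor>t\<rfloor> \<le> round t" "round t \<le> \<lfloor>t\<rfloor> + 1"
  for t :: real
  unfolding round_def by linarith+

lemma emeasure_lborel_cube_cart:
  fixes a :: "real ^ 'n::finite"
  assumes "0 \<le> s"
  shows "emeasure lborel (box a (a + (\<chi> i. s))) = ennreal (s ^ CARD('n))"
proof -
  have "(a + (\<chi> i. s) - a) \<bullet> b = s" if "b \<in> Basis" for b
    using that by (auto simp: Basis_vec_def inner_axis)
  then show ?thesis
    using assms by (subst emeasure_lborel_box) (auto simp: inner_diff_left inner_add_left)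
qed

text \<open>\<open>lattice_box y m r j\<close> is the set of \<open>x\<close> with \<open>\<bar>m x\<^sub>i + y\<^sub>i - j\<^sub>i\<bar> < r\<close> for all \<open>i\<close>.\<close>

definition lattice_box :: "real ^ 'n::finite \<Rightarrow> nat \<Rightarrow> real \<Rightarrow> ('n \<Rightarrow> int) \<Rightarrow> (real ^ 'n) set" where
  "lattice_box y m r j =
     box (\<chi> i. (of_int (j i) - y $ i - r) / m) ((\<chi> i. (of_int (j i) - y $ i - r) / m) + (\<chi> i. 2 * r / m))"

definition lattice_indices :: "real ^ 'n::finite \<Rightarrow> nat \<Rightarrow> ('n \<Rightarrow> int) set" where
  "lattice_indices y m = PiE UNIV (\<lambda>i. {\<lfloor>y $ i\<rfloor> .. \<lfloor>y $ i\<rfloor> + int m + 1})"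

lemma finite_lattice_indices: "finite (lattice_indices y m)"
  unfolding lattice_indices_def by (intro finite_PiE) auto

lemma card_lattice_indices: "card (lattice_indices y m) = (m + 2) ^ CARD('n)"
  for y :: "real ^ 'n::finite"
proof -
  have "card {\<lfloor>y $ i\<rfloor> .. \<lfloor>y $ i\<rfloor> + int m + 1} = m + 2" for i by simp
  then show ?thesis unfolding lattice_indices_def by (simp add: card_PiE)
qed

lemma lattice_box_sets: "lattice_box y m r j \<in> sets borel"
  unfolding lattice_box_def by simp

lemma emeasure_lattice_box:
  fixes y :: "real ^ 'n::finite"
  assumes "0 \<le> r"
  shows "emeasure lborel (lattice_box y m r j) = ennreal ((2 * r / m) ^ CARD('n))"
  unfolding lattice_box_def using assms by (intro emeasure_lborel_cube_cart) simp

lemma cube_approx_subset_lattice_boxes: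
  fixes y :: "real ^ 'n::finite"
  assumes x: "x \<in> cbox 0 1" and m: "m > 0" and approx: "dZ (of_nat m *\<^sub>R x + y) < r"
  shows "x \<in> (\<Union>j\<in>lattice_indices y m. lattice_box y m r j)"
proof
  define j where "j i = round (real m * x $ i + y $ i)" for i
  have close: "\<bar>real m * x $ i + y $ i - of_int (j i)\<bar> < r" for i
    using dZ_coord_le[of "of_nat m *\<^sub>R x + y" i] approx unfolding j_def by simp
  have "(of_int (j i) - y $ i - r) / m < x $ i \<and> x $ i < (of_int (j i) - y $ i - r) / m + 2 * r / m" for i
    using close[of i] m by (simp add: field_simps abs_less_iff)
  then show "x \<in> lattice_box y m r j"
    by (simp add: lattice_box_def mem_box_cart)
  have "\<lfloor>y $ i\<rfloor> \<le> j i \<and> j i \<le> \<lfloor>y $ i\<rfloor> + int m + 1" for i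
  proof -
    have "0 \<le> real m * x $ i" "real m * x $ i \<le> real m"
      using x by (auto simp: mem_box_cart mult_left_le)
    then have "\<lfloor>y $ i\<rfloor> \<le> \<lfloor>real m * x $ i + y $ i\<rfloor>" "\<lfloor>real m * x $ i + y $ i\<rfloor> \<le> \<lfloor>y $ i\<rfloor> + int m"
      by (simp_all add: le_floor_iff floor_le_iff)
        (use of_int_floor_le[of "y $ i"] real_of_int_floor_add_one_gt[of "y $ i"] in linarith)+
    then show ?thesis
      using round_between_floor[of "real m * x $ i + y $ i"] unfolding j_def by linarith
  qed
  then show "j \<in> lattice_indices y m"
    unfolding lattice_indices_def by auto
qed

lemma emeasure_lattice_boxes_le:
  fixes y :: "real ^ 'n::finite"
  assumes r: "0 \<le> r" and m: "m > 0"
  shows "emeasure lborel (\<Union>j\<in>lattice_indices y m. lattice_box y m r j) \<le> ennreal ((6 * r) ^ CARD('n))"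
proof -
  have "emeasure lborel (\<Union>j\<in>lattice_indices y m. lattice_box y m r j)
          \<le> (\<Sum>j\<in>lattice_indices y m. emeasure lborel (lattice_box y m r j))"
    by (rule emeasure_subadditive_finite) (auto simp: finite_lattice_indices lattice_box_sets)
  also have "\<dots> = ennreal (((real m + 2) * (2 * r / m)) ^ CARD('n))"
    using r by (simp add: emeasure_lattice_box card_lattice_indices ennreal_of_nat_eq_real_of_nat
                  add.commute flip: ennreal_mult power_mult_distrib)
  also have "\<dots> \<le> ennreal ((6 * r) ^ CARD('n))"
  proof (intro ennreal_leI power_mono)
    have "(real m + 2) * (2 * r / m) = 2 * r + 4 * r / m"
      using m by (simp add: field_simps)
    also have "\<dots> \<le> 6 * r"
      using m r by (simp add: field_simps mult_le_cancel_left1)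
    finally show "(real m + 2) * (2 * r / m) \<le> 6 * r" .
  qed (use r in simp)
  finally show ?thesis .
qed

definition dyadic_cover :: "real ^ 'n::finite \<Rightarrow> real \<Rightarrow> nat \<Rightarrow> (real ^ 'n) set" where
  "dyadic_cover y \<epsilon> k =
     (\<Union>m\<in>{1..(2::nat) ^ k}. \<Union>j\<in>lattice_indices y m. lattice_box y m (root CARD('n) (\<epsilon> / 2 ^ k)) j)"

lemma dyadic_cover_sets [measurable]: "dyadic_cover y \<epsilon> k \<in> sets lborel"
  unfolding dyadic_cover_def by (auto intro!: finite_lattice_indices lattice_box_sets)

lemma emeasure_dyadic_cover_le:
  fixes y :: "real ^ 'n::finite"
  assumes "0 \<le> \<epsilon>"
  shows "emeasure lborel (dyadic_cover y \<epsilon> k) \<le> ennreal (6 ^ CARD('n) * \<epsilon>)"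
proof -
  define r where "r = root CARD('n) (\<epsilon> / 2 ^ k)"
  have r: "0 \<le> r" "r ^ CARD('n) = \<epsilon> / 2 ^ k"
    unfolding r_def using assms by (auto simp: real_root_ge_zero)
  have "emeasure lborel (dyadic_cover y \<epsilon> k)
          \<le> (\<Sum>m\<in>{1..(2::nat) ^ k}. emeasure lborel (\<Union>j\<in>lattice_indices y m. lattice_box y m r j))"
    unfolding dyadic_cover_def r_def[symmetric]
    by (rule emeasure_subadditive_finite) (auto intro!: finite_lattice_indices lattice_box_sets)
  also have "\<dots> \<le> (\<Sum>m\<in>{1..(2::nat) ^ k}. ennreal ((6 * r) ^ CARD('n)))"
    by (intro sum_mono emeasure_lattice_boxes_le r) auto
  also have "\<dots> = ennreal (\<Sum>m\<in>{1..(2::nat) ^ k}. (6 * r) ^ CARD('n))"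
    using r assms by (subst sum_ennreal) auto
  also have "(\<Sum>m\<in>{1..(2::nat) ^ k}. (6 * r) ^ CARD('n)) = 6 ^ CARD('n) * \<epsilon>"
    using r by (simp add: power_mult_distrib)
  finally show ?thesis .
qed

definition dyadic_scale :: "nat set \<Rightarrow> nat \<Rightarrow> nat" where
  "dyadic_scale K n = (LEAST k. k \<in> K \<and> n \<le> 2 ^ k)"

lemma dyadic_scale_spec:
  assumes "infinite K"
  shows "dyadic_scale K n \<in> K" "n \<le> 2 ^ dyadic_scale K n"
proof -
  obtain k where "k \<ge> n" "k \<in> K"
    using assms by (auto simp: infinite_nat_iff_unbounded_le)
  moreover have "k < 2 ^ k" by (rule less_exp)
  ultimately have "\<exists>k. k \<in> K \<and> n \<le> 2 ^ k" by (metis le_trans less_imp_le_nat)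
  then show "dyadic_scale K n \<in> K" "n \<le> 2 ^ dyadic_scale K n"
    unfolding dyadic_scale_def by (metis (mono_tags, lifting) LeastI_ex)+
qed

lemma dyadic_scale_le: "k \<in> K \<Longrightarrow> n \<le> 2 ^ k \<Longrightarrow> dyadic_scale K n \<le> k"
  unfolding dyadic_scale_def by (rule Least_le) simp

lemma dyadic_scale_mono: "infinite K \<Longrightarrow> m \<le> n \<Longrightarrow> dyadic_scale K m \<le> dyadic_scale K n"
  by (meson dyadic_scale_spec dyadic_scale_le le_trans)

text \<open>Every \<open>k \<in> K\<close> with \<open>k \<ge> 1\<close> makes the block \<open>2\<^sup>k\<^sup>-\<^sup>1 \<le> n < 2\<^sup>k\<close> contribute at least \<open>\<epsilon>/2\<close>.\<close>

lemma not_summable_dyadic_scale: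
  fixes \<epsilon> :: real
  assumes K: "infinite K" and \<epsilon>: "\<epsilon> > 0"
  shows "\<not> summable (\<lambda>n. \<epsilon> / 2 ^ dyadic_scale K (Suc n))"
proof
  let ?f = "\<lambda>n. \<epsilon> / 2 ^ dyadic_scale K (Suc n)"
  assume "summable ?f"
  then obtain N where N: "\<And>a b. a \<ge> N \<Longrightarrow> norm (\<Sum>n\<in>{a..<b}. ?f n) < \<epsilon> / 2"
    unfolding summable_Cauchy using \<epsilon> by (meson half_gt_zero)
  obtain k where k: "k \<ge> Suc N" "k \<in> K"
    using K by (auto simp: infinite_nat_iff_unbounded_le)
  then obtain l where l: "k = Suc l" "N \<le> l"
    by (cases k) auto
  have "N \<le> 2 ^ l"
    using l(2) less_exp[of l] by linarith
  have "\<epsilon> / 2 = (\<Sum>n\<in>{2 ^ l..<(2::nat) ^ k}. \<epsilon> / 2 ^ k)"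
    using l(1) by (simp add: field_simps)
  also have "\<dots> \<le> (\<Sum>n\<in>{2 ^ l..<(2::nat) ^ k}. ?f n)"
  proof (rule sum_mono)
    fix n assume "n \<in> {2 ^ l..<(2::nat) ^ k}"
    then have "dyadic_scale K (Suc n) \<le> k"
      using k by (intro dyadic_scale_le) auto
    then show "\<epsilon> / 2 ^ k \<le> ?f n"
      using \<epsilon> by (simp add: frac_le)
  qed
  also have "\<dots> \<le> norm (\<Sum>n\<in>{2 ^ l..<(2::nat) ^ k}. ?f n)"
    by simp
  also have "\<dots> < \<epsilon> / 2"
    by (rule N[OF \<open>N \<le> 2 ^ l\<close>])
  finally show False by simp
qed

lemma root_dyadic_scale_in_Dclass:
  assumes K: "infinite K" and \<epsilon>: "\<epsilon> > 0"
  shows "(\<lambda>n. root CARD('n) (\<epsilon> / 2 ^ dyadic_scale K n)) \<in> Dclass TYPE('n::finite)"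
  unfolding Dclass_def mem_Collect_eq
proof (intro conjI allI impI)
  show "0 \<le> root CARD('n) (\<epsilon> / 2 ^ dyadic_scale K n)" for n
    using \<epsilon> by (simp add: real_root_ge_zero)
  show "root CARD('n) (\<epsilon> / 2 ^ dyadic_scale K n) \<le> root CARD('n) (\<epsilon> / 2 ^ dyadic_scale K m)"
    if "m \<le> n" for m n
    using dyadic_scale_mono[OF K that] \<epsilon> by (intro real_root_le_mono) (auto simp: frac_le)
  show "\<not> summable (\<lambda>n. root CARD('n) (\<epsilon> / 2 ^ dyadic_scale K (Suc n)) ^ CARD('n))"
    using not_summable_dyadic_scale[OF K \<epsilon>] \<epsilon> by simp
qed

lemma Pi_fiber_dyadic_approx:
  fixes y :: "real ^ 'n::finite"
  assumes x: "x \<in> Pi_fiber y" and \<epsilon>: "\<epsilon> > 0"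
  shows "\<forall>\<^sub>F k in sequentially. \<exists>m\<in>{1..(2::nat) ^ k}. dZ (of_nat m *\<^sub>R x + y) < root CARD('n) (\<epsilon> / 2 ^ k)"
proof (rule ccontr)
  define K where "K = {k. \<forall>m\<in>{1..(2::nat) ^ k}. root CARD('n) (\<epsilon> / 2 ^ k) \<le> dZ (of_nat m *\<^sub>R x + y)}"
  define \<psi> where "\<psi> n = root CARD('n) (\<epsilon> / 2 ^ dyadic_scale K n)" for n
  assume "\<not> ?thesis"
  then have K_inf: "infinite K"
    by (auto simp: K_def not_eventually not_less cofinite_eq_sequentially[symmetric]
             simp flip: Inf_many_def)
  have "(x, y) \<in> W \<psi>"
    using x root_dyadic_scale_in_Dclass[OF K_inf \<epsilon>]
    unfolding Pi_fiber_def Pi_set_def \<psi>_def by auto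
  then have "infinite {n. n \<ge> 1 \<and> dZ (of_nat n *\<^sub>R x + y) < \<psi> n}"
    unfolding W_def by simp
  moreover have "\<psi> n \<le> dZ (of_nat n *\<^sub>R x + y)" if "n \<ge> 1" for n
    using dyadic_scale_spec[OF K_inf, of n] that unfolding \<psi>_def K_def by auto
  then have "{n. n \<ge> 1 \<and> dZ (of_nat n *\<^sub>R x + y) < \<psi> n} = {}"
    by (auto simp: not_less[symmetric])
  ultimately show False
    by (metis finite.emptyI)
qed

lemma Pi_fiber_eventually_in_dyadic_cover:
  fixes y :: "real ^ 'n::finite"
  assumes x: "x \<in> Pi_fiber y" "x \<in> cbox 0 1" and \<epsilon>: "\<epsilon> > 0"
  shows "\<forall>\<^sub>F k in sequentially. x \<in> dyadic_cover y \<epsilon> k"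
  using Pi_fiber_dyadic_approx[OF x(1) \<epsilon>]
proof (rule eventually_mono)
  fix k assume "\<exists>m\<in>{1..(2::nat) ^ k}. dZ (of_nat m *\<^sub>R x + y) < root CARD('n) (\<epsilon> / 2 ^ k)"
  then obtain m where m: "m \<in> {1..(2::nat) ^ k}" "dZ (of_nat m *\<^sub>R x + y) < root CARD('n) (\<epsilon> / 2 ^ k)" ..
  then have "x \<in> (\<Union>j\<in>lattice_indices y m. lattice_box y m (root CARD('n) (\<epsilon> / 2 ^ k)) j)"
    using x(2) by (intro cube_approx_subset_lattice_boxes) auto
  with m(1) show "x \<in> dyadic_cover y \<epsilon> k"
    unfolding dyadic_cover_def by blast
qed

lemma emeasure_liminf_le:
  fixes A :: "nat \<Rightarrow> 'a set"
  assumes "\<And>k. A k \<in> sets M" "\<And>k. emeasure M (A k) \<le> c"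
  shows "emeasure M (\<Union>K. \<Inter>k\<in>{K..}. A k) \<le> c"
proof -
  have sets: "(\<Inter>k\<in>{K..}. A k) \<in> sets M" for K
    using assms(1) by (intro sets.countable_INT') auto
  have "emeasure M (\<Union>K. \<Inter>k\<in>{K..}. A k) = (SUP K. emeasure M (\<Inter>k\<in>{K..}. A k))"
    using sets by (intro SUP_emeasure_incseq[symmetric]) (auto simp: incseq_def)
  also have "\<dots> \<le> c"
  proof (rule SUP_least)
    fix K
    have "emeasure M (\<Inter>k\<in>{K..}. A k) \<le> emeasure M (A K)"
      using assms(1) by (intro emeasure_mono) auto
    then show "emeasure M (\<Inter>k\<in>{K..}. A k) \<le> c"
      using assms(2)[of K] by (rule order_trans)
  qed
  finally show ?thesis .
qed

lemma null_sets_lebesgue_if_small_covers: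
  fixes S :: "'a::euclidean_space set"
  assumes "\<And>\<epsilon>. \<epsilon> > 0 \<Longrightarrow> S \<subseteq> T \<epsilon> \<and> T \<epsilon> \<in> sets lborel \<and> emeasure lborel (T \<epsilon>) \<le> ennreal (C * \<epsilon>)"
    and "C > 0"
  shows "S \<in> null_sets lebesgue"
  unfolding negligible_iff_null_sets[symmetric] negligible_outer_le
proof (intro allI impI)
  fix e :: real assume "e > 0"
  have "C * (e / C) = e"
    using \<open>C > 0\<close> by simp
  with assms \<open>e > 0\<close> have T: "S \<subseteq> T (e / C)" "T (e / C) \<in> sets lborel"
      "emeasure lborel (T (e / C)) \<le> ennreal e"
    by (metis divide_pos_pos)+
  then have "T (e / C) \<in> lmeasurable" "measure lebesgue (T (e / C)) \<le> e"
    using \<open>e > 0\<close> by (auto simp: fmeasurable_def measure_def enn2real_leI top.extremum_strict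
                             intro: order.strict_trans1)
  with T show "\<exists>T. S \<subseteq> T \<and> T \<in> lmeasurable \<and> measure lebesgue T \<le> e" by blast
qed

theorem lemma12:
  fixes y :: "real ^ 'n::finite"
  shows "Pi_fiber y \<inter> cbox 0 1 \<in> sets lebesgue \<and>
         (measure lebesgue (Pi_fiber y \<inter> cbox 0 1) = 0 \<or>
          measure lebesgue (Pi_fiber y \<inter> cbox 0 1) = 1)"
proof -
  define T where "T \<epsilon> = (\<Union>K. \<Inter>k\<in>{K..}. dyadic_cover y \<epsilon> k)" for \<epsilon>
  have "Pi_fiber y \<inter> cbox 0 1 \<subseteq> T \<epsilon>" if \<epsilon>: "\<epsilon> > 0" for \<epsilon>
  proof
    fix x assume "x \<in> Pi_fiber y \<inter> cbox 0 1"
    then obtain K where "\<forall>k\<ge>K. x \<in> dyadic_cover y \<epsilon> k"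
      using Pi_fiber_eventually_in_dyadic_cover[of x y \<epsilon>] \<epsilon> by (auto simp: eventually_sequentially)
    then show "x \<in> T \<epsilon>"
      unfolding T_def by blast
  qed
  moreover have "T \<epsilon> \<in> sets lborel" for \<epsilon>
    unfolding T_def by measurable
  moreover have "emeasure lborel (T \<epsilon>) \<le> ennreal (6 ^ CARD('n) * \<epsilon>)" if "\<epsilon> > 0" for \<epsilon>
    unfolding T_def using that by (intro emeasure_liminf_le emeasure_dyadic_cover_le dyadic_cover_sets) auto
  ultimately have "Pi_fiber y \<inter> cbox 0 1 \<in> null_sets lebesgue"
    by (intro null_sets_lebesgue_if_small_covers[where T = T and C = "6 ^ CARD('n)"]) auto
  then show ?thesis
    by (auto simp: measure_def null_setsD1 null_setsD2)
qed

end
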